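(* Let $\tilde Q$ be the subgroup of $Q_C$ generated by the images of $A_1,\dots,A_m$. Then $\tilde Q$ is a malnormal subgroup of $Q_C$, i.e. for every $g\in Q_C\setminus\tilde Q$ one has $g^{-1}\tilde Qg\cap\tilde Q=\{1\}$.
   Context: Let $Q$ be a finitely generated recursively presented group with presentation $\langle Y\mid\mathcal{S}\rangle$, where $Y=\{y_1,\dots,y_m\}$ is finite, $\mathcal{S}$ is a recursive set of positive words over $Y$, and the empty word is not in $\mathcal{S}$. Let $C\ge1$ be an integer. For $i=1,\dots,m$ let $Y_{C,i}=\{a_{1,i},\dots,a_{C,i}\}$, $Y_C=\bigcup_iY_{C,i}$ (all letters distinct), $A_i=a_{1,i}\cdots a_{C,i}\in F(Y_C)$. For $r=r(y_1,\dots,y_m)\in\mathcal{S}$ let $r_C=r(A_1,\dots,A_m)$, $\mathcal{S}_C=\{r_C:r\in\mathcal{S}\}$, and $Q_C=\langle Y_C\mid\mathcal{S}_C\rangle$. *)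

theory Defs
  imports Main
begin

text \<open>Words in the free group on an alphabet of type 'a: lists of letters with
  an exponent flag (False = letter, True = inverse letter).\<close>
type_synonym 'a fword = "('a \<times> bool) list"

definition inv_word :: "'a fword \<Rightarrow> 'a fword" where
  "inv_word w = rev (map (\<lambda>(x, b). (x, \<not> b)) w)"

definition pos_word :: "'a list \<Rightarrow> 'a fword" where
  "pos_word w = map (\<lambda>x. (x, False)) w"

inductive pres_eq :: "'a fword set \<Rightarrow> 'a fword \<Rightarrow> 'a fword \<Rightarrow> bool" for R where
  refl: "pres_eq R w w"
| sym: "pres_eq R u v \<Longrightarrow> pres_eq R v u"
| trans: "pres_eq R u v \<Longrightarrow> pres_eq R v w \<Longrightarrow> pres_eq R u w"
| cancel: "pres_eq R (u @ [(x, b), (x, \<not> b)] @ v) (u @ v)"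
| rel: "r \<in> R \<Longrightarrow> pres_eq R (u @ r @ v) (u @ v)"

text \<open>Generators y_i of Q are indexed by i < m (0-based); the generator a_{j,i}
  of Q_C is the pair (j, i) with j < C, i < m.\<close>
definition A_word :: "nat \<Rightarrow> nat \<Rightarrow> (nat \<times> nat) list" where
  "A_word C i = map (\<lambda>j. (j, i)) [0..<C]"

definition rel_C :: "nat \<Rightarrow> nat list \<Rightarrow> (nat \<times> nat) list" where
  "rel_C C r = concat (map (A_word C) r)"

definition relators_C :: "nat \<Rightarrow> nat list set \<Rightarrow> (nat \<times> nat) fword set" where
  "relators_C C S = (\<lambda>r. pos_word (rel_C C r)) ` S"

definition is_word_YC :: "nat \<Rightarrow> nat \<Rightarrow> (nat \<times> nat) fword \<Rightarrow> bool" where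
  "is_word_YC C m w \<longleftrightarrow> (\<forall>((j, i), b) \<in> set w. j < C \<and> i < m)"

definition A_product :: "nat \<Rightarrow> (nat \<times> bool) list \<Rightarrow> (nat \<times> nat) fword" where
  "A_product C xs = concat (map (\<lambda>(i, e). if e then inv_word (pos_word (A_word C i))
                                            else pos_word (A_word C i)) xs)"

definition in_Qtilde :: "nat \<Rightarrow> nat \<Rightarrow> nat list set \<Rightarrow> (nat \<times> nat) fword \<Rightarrow> bool" where
  "in_Qtilde C m S w \<longleftrightarrow>
     (\<exists>xs. (\<forall>(i, e) \<in> set xs. i < m) \<and> pres_eq (relators_C C S) w (A_product C xs))"

end

theory Submission
  imports Defs
begin

(* Put P_i = a_{0,i} ... a_{C-2,i}.  Since a_{C-1,i} = P_i^{-1} A_i, the group Q_C is the free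
   product of the free group on the letters a_{j,i} with j < C - 1 and of Qtilde, which makes
   Qtilde malnormal.  The free product structure is established by van der Waerden's method:
   Q_C acts on reduced sequences of free letters and nontrivial elements of Qtilde, and the
   relators act trivially because they are products of the A_i.  For g outside Qtilde the normal
   form N of g contains a free letter.  If x and g^-1 x g both lie in Qtilde, then left
   multiplication by x and right multiplication by g^-1 x g have the same effect on N; the
   former changes the Qtilde-part in front of the first free letter of N unless x = 1, while the
   latter leaves it unchanged. *)

lemma inv_word_Nil [simp]: "inv_word [] = []"
  by (simp add: inv_word_def)

lemma inv_word_Cons: "inv_word ((x, b) # w) = inv_word w @ [(x, \<not> b)]"
  by (simp add: inv_word_def)

lemma inv_word_append: "inv_word (u @ v) = inv_word v @ inv_word u"
  by (simp add: inv_word_def)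

lemma inv_word_inv_word [simp]: "inv_word (inv_word w) = w"
  by (induction w) (auto simp: inv_word_def)

lemma pres_eq_context: "pres_eq R u v \<Longrightarrow> pres_eq R (p @ u @ q) (p @ v @ q)"
proof (induction rule: pres_eq.induct)
  case (cancel u x b v)
  show ?case
    using pres_eq.cancel[of R "p @ u" x b "v @ q"] by simp
next
  case (rel r u v)
  then show ?case
    using pres_eq.rel[of r R "p @ u" "v @ q"] by simp
qed (blast intro: pres_eq.intros)+

lemma pres_eq_append: "pres_eq R u u' \<Longrightarrow> pres_eq R v v' \<Longrightarrow> pres_eq R (u @ v) (u' @ v')"
  using pres_eq_context[of R u u' "[]" v] pres_eq_context[of R v v' u' "[]"]
  by (auto intro: pres_eq.trans)

lemma pres_eq_inv_right: "pres_eq R (w @ inv_word w) []"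
proof (induction w)
  case Nil
  show ?case
    by (simp add: pres_eq.refl)
next
  case (Cons a w)
  obtain x b where a: "a = (x, b)"
    by fastforce
  have "pres_eq R ([a] @ (w @ inv_word w) @ [(x, \<not> b)]) ([a] @ [] @ [(x, \<not> b)])"
    using Cons.IH by (rule pres_eq_context)
  moreover have "pres_eq R ([] @ [(x, b), (x, \<not> b)] @ []) ([] @ [])"
    by (rule pres_eq.cancel)
  ultimately show ?case
    using a by (auto simp: inv_word_Cons intro: pres_eq.trans)
qed

lemma pres_eq_inv_left: "pres_eq R (inv_word w @ w) []"
  using pres_eq_inv_right[of R "inv_word w"] by simp

lemma A_product_append: "A_product C (xs @ ys) = A_product C xs @ A_product C ys"
  by (simp add: A_product_def)

lemma pos_word_rel_C: "pos_word (rel_C C r) = A_product C (map (\<lambda>i. (i, False)) r)"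
  by (induction r) (simp_all add: rel_C_def pos_word_def A_product_def)

lemma in_Qtilde_Nil: "in_Qtilde C m S []"
  unfolding in_Qtilde_def by (rule exI[of _ "[]"]) (simp add: A_product_def pres_eq.refl)

lemma in_Qtilde_A_product: "\<forall>(i, e) \<in> set xs. i < m \<Longrightarrow> in_Qtilde C m S (A_product C xs)"
  unfolding in_Qtilde_def by (blast intro: pres_eq.refl)

lemma in_Qtilde_append:
  assumes "in_Qtilde C m S u" and "in_Qtilde C m S v"
  shows "in_Qtilde C m S (u @ v)"
proof -
  obtain xs ys where "\<forall>(i, e) \<in> set xs. i < m" "pres_eq (relators_C C S) u (A_product C xs)"
    and "\<forall>(i, e) \<in> set ys. i < m" "pres_eq (relators_C C S) v (A_product C ys)"
    using assms unfolding in_Qtilde_def by blast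
  then show ?thesis
    unfolding in_Qtilde_def
    by (intro exI[of _ "xs @ ys"]) (auto simp: A_product_append intro: pres_eq_append)
qed

lemma in_Qtilde_pres_eq:
  "pres_eq (relators_C C S) u v \<Longrightarrow> in_Qtilde C m S v \<Longrightarrow> in_Qtilde C m S u"
  unfolding in_Qtilde_def by (blast intro: pres_eq.trans)

datatype 'a syllable = Free "'a \<times> bool" | Sub "'a fword set"

fun mergeable :: "'a syllable \<Rightarrow> 'a syllable \<Rightarrow> bool" where
  "mergeable (Sub _) (Sub _) = True"
| "mergeable (Free (t, b)) (Free (t', b')) = (t' = t \<and> b' = (\<not> b))"
| "mergeable _ _ = False"

abbreviation reduced :: "'a syllable list \<Rightarrow> bool" where
  "reduced \<equiv> successively (\<lambda>x y. \<not> mergeable x y)"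

definition no_sub_head :: "'a syllable list \<Rightarrow> bool" where
  "no_sub_head \<omega> \<longleftrightarrow> (\<forall>a \<beta>. \<omega> \<noteq> Sub a # \<beta>)"

lemma no_sub_headE:
  assumes "no_sub_head \<omega>"
  obtains "\<omega> = []" | x \<beta> where "\<omega> = Free x # \<beta>"
proof (cases \<omega>)
  case (Cons y \<beta>)
  then show ?thesis
    using assms that by (cases y) (auto simp: no_sub_head_def)
qed (use that in blast)

definition has_free :: "'a syllable list \<Rightarrow> bool" where
  "has_free \<omega> \<longleftrightarrow> (\<exists>x. Free x \<in> set \<omega>)"

fun free_act :: "'a \<times> bool \<Rightarrow> 'a syllable list \<Rightarrow> 'a syllable list" where
  "free_act (t, b) (Free (t', b') # \<beta>) =
     (if t' = t \<and> b' = (\<not> b) then \<beta> else Free (t, b) # Free (t', b') # \<beta>)"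
| "free_act x \<omega> = Free x # \<omega>"

lemma reduced_free_act: "reduced \<omega> \<Longrightarrow> reduced (free_act x \<omega>)"
  by (induction x \<omega> rule: free_act.induct) (auto simp: successively_Cons)

lemma reduced_foldr_free_act: "reduced \<omega> \<Longrightarrow> reduced (foldr free_act w \<omega>)"
  by (induction w) (simp_all add: reduced_free_act)

lemma set_free_act: "set (free_act x \<omega>) \<subseteq> insert (Free x) (set \<omega>)"
  by (induction x \<omega> rule: free_act.induct) auto

lemma free_act_not_mergeable:
  "\<omega> = [] \<or> \<not> mergeable (Free x) (hd \<omega>) \<Longrightarrow> free_act x \<omega> = Free x # \<omega>"
  by (cases "(x, \<omega>)" rule: free_act.cases) auto

lemma free_act_inverse: "reduced \<omega> \<Longrightarrow> free_act (t, \<not> b) (free_act (t, b) \<omega>) = \<omega>"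
  by (induction "(t, b)" \<omega> rule: free_act.induct)
    (auto simp: successively_Cons free_act_not_mergeable)

lemma foldr_free_act_inverse:
  assumes "reduced \<omega>"
  shows "foldr free_act (inv_word w) (foldr free_act w \<omega>) = \<omega>"
    and "foldr free_act w (foldr free_act (inv_word w) \<omega>) = \<omega>"
proof -
  show inverse: "foldr free_act (inv_word w) (foldr free_act w \<omega>) = \<omega>" for w
  proof (induction w)
    case (Cons x w)
    obtain t b where x: "x = (t, b)"
      by fastforce
    then show ?case
      using Cons reduced_foldr_free_act[OF assms, of w]
      by (simp add: inv_word_Cons free_act_inverse)
  qed simp
  show "foldr free_act w (foldr free_act (inv_word w) \<omega>) = \<omega>"
    using inverse[of "inv_word w"] by simp
qed

(* Sub syllables are elements of the group presented by R itself (classes of words), so no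
   presentation of the subgroup H is needed. *)
locale free_product_nf =
  fixes R :: "'a fword set" and H :: "'a fword \<Rightarrow> bool"
  assumes H_Nil: "H []"
    and H_append: "H u \<Longrightarrow> H v \<Longrightarrow> H (u @ v)"
begin

definition elem :: "'a fword \<Rightarrow> 'a fword set" where
  "elem w = {v. pres_eq R w v}"

definition rep :: "'a fword set \<Rightarrow> 'a fword" where
  "rep a = (SOME w. w \<in> a)"

lemma elem_eq_iff: "elem u = elem v \<longleftrightarrow> pres_eq R u v"
  unfolding elem_def by (blast intro: pres_eq.intros)

lemma elem_rep [simp]: "elem (rep (elem u)) = elem u"
proof -
  have "u \<in> elem u"
    by (simp add: elem_def pres_eq.refl)
  then have "rep (elem u) \<in> elem u"
    unfolding rep_def by (rule someI)
  then show ?thesis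
    unfolding elem_eq_iff by (simp add: elem_def pres_eq.sym)
qed

lemma elem_append_cong: "elem u = elem u' \<Longrightarrow> elem v = elem v' \<Longrightarrow> elem (u @ v) = elem (u' @ v')"
  by (simp add: elem_eq_iff pres_eq_append)

lemma elem_append_rep [simp]:
  "elem (rep (elem u) @ v) = elem (u @ v)" "elem (v @ rep (elem u)) = elem (v @ u)"
  by (rule elem_append_cong; simp)+

lemma elem_inverse [simp]: "elem (inv_word w @ w) = elem []" "elem (w @ inv_word w) = elem []"
  by (simp_all add: elem_eq_iff pres_eq_inv_left pres_eq_inv_right)

lemma elem_append_trivial [simp]:
  "elem v = elem [] \<Longrightarrow> elem (u @ v) = elem u" "elem v = elem [] \<Longrightarrow> elem (v @ u) = elem u"
  using elem_append_cong[of u u v "[]"] elem_append_cong[of v "[]" u u] by simp_all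

lemma elem_cancel_inverse: "elem (u @ inv_word w @ w @ v) = elem (u @ v)"
  using elem_append_cong[OF HOL.refl elem_append_trivial(2)[OF elem_inverse(1)], of u w v] by simp

lemma elem_cancel_right: "elem (u @ w) = elem (v @ w) \<Longrightarrow> elem u = elem v"
  using elem_append_cong[of "u @ w" "v @ w" "inv_word w" "inv_word w"] by simp

lemma elem_cancel_pair: "elem ((t, b) # (t, \<not> b) # w) = elem w"
  using pres_eq.cancel[of R "[]" t b w] by (simp add: elem_eq_iff)

definition sub_block :: "'a fword \<Rightarrow> 'a syllable list" where
  "sub_block w = (if elem w = elem [] then [] else [Sub (elem w)])"

lemma sub_block_eq_iff: "sub_block u = sub_block v \<longleftrightarrow> elem u = elem v"
  by (auto simp: sub_block_def)

lemma sub_block_Free_eq_imp_elem_eq: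
  "sub_block u @ Free x # \<beta> = sub_block v @ Free y # \<gamma> \<Longrightarrow> elem u = elem v"
  by (auto simp: sub_block_def split: if_splits)

definition sub_elem :: "'a fword set \<Rightarrow> bool" where
  "sub_elem a \<longleftrightarrow> (\<exists>w. a = elem w \<and> H w \<and> elem w \<noteq> elem [])"

definition normal :: "'a syllable list \<Rightarrow> bool" where
  "normal \<omega> \<longleftrightarrow> reduced \<omega> \<and> (\<forall>a. Sub a \<in> set \<omega> \<longrightarrow> sub_elem a)"

lemma normal_Nil [simp]: "normal []"
  by (simp add: normal_def)

lemma normal_reduced: "normal \<omega> \<Longrightarrow> reduced \<omega>"
  by (simp add: normal_def)

lemma normal_free_act: "normal \<omega> \<Longrightarrow> normal (free_act x \<omega>)"
  using reduced_free_act set_free_act by (fastforce simp: normal_def)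

lemma normal_foldr_free_act: "normal \<omega> \<Longrightarrow> normal (foldr free_act w \<omega>)"
  by (induction w) (simp_all add: normal_free_act)

lemma normal_sub_block_append:
  assumes "H w" and "no_sub_head \<beta>" and "normal \<beta>"
  shows "normal (sub_block w @ \<beta>)"
proof (cases "elem w = elem []")
  case False
  then have "sub_elem (elem w)"
    using assms(1) by (auto simp: sub_elem_def)
  moreover have "\<beta> = [] \<or> \<not> mergeable (Sub (elem w)) (hd \<beta>)"
    using assms(2) by (rule no_sub_headE) simp_all
  ultimately show ?thesis
    using False assms(3) by (simp add: sub_block_def normal_def successively_Cons)
qed (simp add: sub_block_def assms(3))

lemma normal_decomp:
  assumes "normal \<omega>"
  obtains w \<beta> where "\<omega> = sub_block w @ \<beta>" and "H w" and "no_sub_head \<beta>" and "normal \<beta>"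
proof (cases "no_sub_head \<omega>")
  case True
  show ?thesis
    by (rule that[of "[]" \<omega>]) (simp_all add: sub_block_def H_Nil True assms)
next
  case False
  then obtain a \<beta> where \<omega>: "\<omega> = Sub a # \<beta>"
    by (auto simp: no_sub_head_def)
  then have "sub_elem a"
    using assms by (simp add: normal_def)
  then obtain w where w: "a = elem w" "H w" "elem w \<noteq> elem []"
    unfolding sub_elem_def by blast
  have "reduced (Sub a # \<beta>)"
    using assms \<omega> by (simp add: normal_def)
  then have "no_sub_head \<beta>"
    by (cases \<beta>) (auto simp: no_sub_head_def)
  moreover have "normal \<beta>"
    using assms \<omega> by (cases \<beta>) (simp_all add: normal_def)
  ultimately show ?thesis
    using w by (intro that[of w \<beta>]) (simp_all add: \<omega> sub_block_def)
qed

lemma normal_without_free: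
  assumes "normal \<omega>" and "\<not> has_free \<omega>"
  obtains w where "\<omega> = sub_block w" and "H w"
  using assms(1)
proof (rule normal_decomp)
  fix w \<beta>
  assume \<omega>: "\<omega> = sub_block w @ \<beta>" and "H w" and "no_sub_head \<beta>"
  moreover have "\<beta> = []"
    using \<open>no_sub_head \<beta>\<close> by (rule no_sub_headE) (use assms(2) \<omega> in \<open>auto simp: has_free_def\<close>)
  ultimately show thesis
    using that by simp
qed

fun sub_act :: "'a fword \<Rightarrow> 'a syllable list \<Rightarrow> 'a syllable list" where
  "sub_act u (Sub a # \<beta>) = sub_block (u @ rep a) @ \<beta>"
| "sub_act u \<omega> = sub_block u @ \<omega>"

lemma sub_act_sub_block:
  assumes "no_sub_head \<beta>"
  shows "sub_act u (sub_block w @ \<beta>) = sub_block (u @ w) @ \<beta>"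
proof (cases "elem w = elem []")
  case True
  have "sub_act u \<beta> = sub_block u @ \<beta>"
    using assms by (rule no_sub_headE) simp_all
  then have "sub_act u (sub_block w @ \<beta>) = sub_block u @ \<beta>"
    using True by (simp add: sub_block_def)
  also have "sub_block u = sub_block (u @ w)"
    using True by (simp add: sub_block_eq_iff)
  finally show ?thesis .
next
  case False
  then have "sub_act u (sub_block w @ \<beta>) = sub_block (u @ rep (elem w)) @ \<beta>"
    by (simp add: sub_block_def[of w])
  also have "sub_block (u @ rep (elem w)) = sub_block (u @ w)"
    by (simp add: sub_block_eq_iff)
  finally show ?thesis .
qed

lemma sub_act_cong:
  assumes "elem u = elem v"
  shows "sub_act u \<omega> = sub_act v \<omega>"
proof -
  have "sub_block (u @ x) = sub_block (v @ x)" for x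
    unfolding sub_block_eq_iff using assms by (rule elem_append_cong) simp
  from this this[of "[]"] show ?thesis
    by (cases "(u, \<omega>)" rule: sub_act.cases) auto
qed

lemma sub_act_sub_act: "normal \<omega> \<Longrightarrow> sub_act u (sub_act v \<omega>) = sub_act (u @ v) \<omega>"
  by (erule normal_decomp) (simp add: sub_act_sub_block)

lemma sub_act_trivial: "normal \<omega> \<Longrightarrow> elem u = elem [] \<Longrightarrow> sub_act u \<omega> = \<omega>"
  by (erule normal_decomp) (simp add: sub_act_sub_block sub_block_eq_iff)

lemma normal_sub_act: "normal \<omega> \<Longrightarrow> H u \<Longrightarrow> normal (sub_act u \<omega>)"
  by (erule normal_decomp) (simp add: sub_act_sub_block normal_sub_block_append H_append)

fun syllable_word :: "'a syllable \<Rightarrow> 'a fword" where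
  "syllable_word (Free x) = [x]"
| "syllable_word (Sub a) = rep a"

definition nf_word :: "'a syllable list \<Rightarrow> 'a fword" where
  "nf_word \<omega> = concat (map syllable_word \<omega>)"

lemma nf_word_simps [simp]:
  "nf_word [] = []" "nf_word (x # \<omega>) = syllable_word x @ nf_word \<omega>"
  "nf_word (\<omega> @ \<beta>) = nf_word \<omega> @ nf_word \<beta>"
  by (simp_all add: nf_word_def)

lemma elem_nf_word_sub_block: "elem (nf_word (sub_block w)) = elem w"
  by (simp add: sub_block_def)

lemma elem_nf_word_sub_act:
  assumes "normal \<omega>"
  shows "elem (nf_word (sub_act u \<omega>)) = elem (u @ nf_word \<omega>)"
  using assms
proof (rule normal_decomp)
  fix w \<beta>
  assume \<omega>: "\<omega> = sub_block w @ \<beta>" and "no_sub_head \<beta>"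
  then have "nf_word (sub_act u \<omega>) = nf_word (sub_block (u @ w)) @ nf_word \<beta>"
    by (simp add: sub_act_sub_block)
  also have "elem \<dots> = elem ((u @ w) @ nf_word \<beta>)"
    by (rule elem_append_cong[OF elem_nf_word_sub_block HOL.refl])
  also have "\<dots> = elem (u @ nf_word (sub_block w) @ nf_word \<beta>)"
    unfolding append_assoc by (intro elem_append_cong HOL.refl) (simp add: elem_nf_word_sub_block)
  also have "\<dots> = elem (u @ nf_word \<omega>)"
    by (simp add: \<omega>)
  finally show ?thesis .
qed

lemma elem_nf_word_free_act: "elem (nf_word (free_act x \<omega>)) = elem (x # nf_word \<omega>)"
  by (induction x \<omega> rule: free_act.induct) (auto simp: elem_cancel_pair)

lemma elem_nf_word_foldr_free_act: "elem (nf_word (foldr free_act w \<omega>)) = elem (w @ nf_word \<omega>)"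
proof (induction w)
  case (Cons x w)
  have "elem (nf_word (foldr free_act (x # w) \<omega>)) = elem ([x] @ nf_word (foldr free_act w \<omega>))"
    by (simp add: elem_nf_word_free_act)
  also have "\<dots> = elem ([x] @ w @ nf_word \<omega>)"
    using Cons.IH by (rule elem_append_cong[OF HOL.refl])
  finally show ?case
    by simp
qed simp

fun right_mult :: "'a syllable list \<Rightarrow> 'a fword \<Rightarrow> 'a syllable list" where
  "right_mult [] d = sub_block d"
| "right_mult [Sub a] d = sub_block (rep a @ d)"
| "right_mult (x # \<beta>) d = x # right_mult \<beta> d"

lemma right_mult_sub_block: "right_mult (sub_block w) d = sub_block (w @ d)"
  by (simp add: sub_block_def sub_block_eq_iff)

lemma right_mult_sub_block_Free:
  "right_mult (sub_block w @ Free x # \<gamma>) d = sub_block w @ Free x # right_mult \<gamma> d"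
  by (simp add: sub_block_def)

lemma free_act_sub_block: "free_act x (sub_block w) = Free x # sub_block w"
  by (simp add: sub_block_def)

lemma free_act_right_mult: "free_act x (right_mult \<omega> d) = right_mult (free_act x \<omega>) d"
proof (cases \<omega>)
  case (Cons y \<beta>)
  then show ?thesis
    by (cases "(x, \<omega>)" rule: free_act.cases; cases \<beta>) (auto simp: free_act_sub_block)
qed (simp add: free_act_sub_block)

lemma foldr_free_act_right_mult:
  "foldr free_act w (right_mult \<omega> d) = right_mult (foldr free_act w \<omega>) d"
  by (induction w) (simp_all add: free_act_right_mult)

lemma sub_act_right_mult: "normal \<omega> \<Longrightarrow> sub_act u (right_mult \<omega> d) = right_mult (sub_act u \<omega>) d"
proof (erule normal_decomp)
  fix w \<beta>
  assume \<omega>: "\<omega> = sub_block w @ \<beta>" and "no_sub_head \<beta>"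
  from \<open>no_sub_head \<beta>\<close> show ?thesis
  proof (rule no_sub_headE)
    assume "\<beta> = []"
    then show ?thesis
      using sub_act_sub_block[where \<beta> = "[]"] by (simp add: \<omega> right_mult_sub_block no_sub_head_def)
  next
    fix x \<gamma>
    assume "\<beta> = Free x # \<gamma>"
    then show ?thesis
      by (simp add: \<omega> right_mult_sub_block_Free sub_act_sub_block no_sub_head_def)
  qed
qed

lemma trivial_if_sub_act_eq_right_mult:
  assumes "normal \<omega>" and "has_free \<omega>" and "sub_act u \<omega> = right_mult \<omega> d"
  shows "elem u = elem []"
  using assms(1)
proof (rule normal_decomp)
  fix w \<beta>
  assume \<omega>: "\<omega> = sub_block w @ \<beta>" and "no_sub_head \<beta>"
  obtain x \<gamma> where \<beta>: "\<beta> = Free x # \<gamma>"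
    using \<open>no_sub_head \<beta>\<close>
    by (rule no_sub_headE)
      (use assms(2) \<omega> in \<open>auto simp: has_free_def sub_block_def split: if_splits\<close>)
  have "sub_block (u @ w) @ Free x # \<gamma> = sub_block w @ Free x # right_mult \<gamma> d"
    using assms(3) \<beta> by (simp add: \<omega> sub_act_sub_block right_mult_sub_block_Free no_sub_head_def)
  then have "elem (u @ w) = elem ([] @ w)"
    by (simp only: append_Nil) (rule sub_block_Free_eq_imp_elem_eq)
  then show ?thesis
    by (rule elem_cancel_right)
qed

end

locale QC =
  fixes C m :: nat and S :: "nat list set"
  assumes C_pos: "C \<ge> 1"
    and relators_in_range: "\<forall>r \<in> S. set r \<subseteq> {..<m}"

sublocale QC \<subseteq> free_product_nf "relators_C C S" "in_Qtilde C m S"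
  by unfold_locales (simp_all add: in_Qtilde_Nil in_Qtilde_append)

context QC
begin

definition A_fword :: "nat \<Rightarrow> (nat \<times> nat) fword" where
  "A_fword i = pos_word (A_word C i)"

definition A_prefix :: "nat \<Rightarrow> (nat \<times> nat) fword" where
  "A_prefix i = pos_word (map (\<lambda>j. (j, i)) [0..<C - 1])"

lemma A_fword_split: "A_fword i = A_prefix i @ [((C - 1, i), False)]"
proof -
  have "[0..<C] = [0..<C - 1] @ [C - 1]"
    using C_pos by (cases C) simp_all
  then show ?thesis
    by (simp add: A_fword_def A_prefix_def A_word_def pos_word_def)
qed

lemma A_product_Cons:
  "A_product C ((i, e) # xs) = (if e then inv_word (A_fword i) else A_fword i) @ A_product C xs"
  by (simp add: A_product_def A_fword_def)

lemma in_Qtilde_A_fword: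
  "i < m \<Longrightarrow> in_Qtilde C m S (A_fword i)" "i < m \<Longrightarrow> in_Qtilde C m S (inv_word (A_fword i))"
  using in_Qtilde_A_product[of "[(i, False)]"] in_Qtilde_A_product[of "[(i, True)]"]
  by (simp_all add: A_product_def A_fword_def)

(* The letters a_{j,i} with j < C - 1 are free; the last letter acts as a_{C-1,i} = P_i^-1 A_i
   with P_i = A_prefix i.  Letters outside Y_C act trivially. *)
fun gen_act :: "(nat \<times> nat) \<times> bool \<Rightarrow> (nat \<times> nat) syllable list \<Rightarrow> (nat \<times> nat) syllable list"
  where
  "gen_act ((j, i), b) \<omega> =
     (if \<not> (j < C \<and> i < m) then \<omega>
      else if Suc j < C then free_act ((j, i), b) \<omega>
      else if b then sub_act (inv_word (A_fword i)) (foldr free_act (A_prefix i) \<omega>)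
      else foldr free_act (inv_word (A_prefix i)) (sub_act (A_fword i) \<omega>))"

abbreviation act :: "(nat \<times> nat) fword \<Rightarrow> (nat \<times> nat) syllable list \<Rightarrow> (nat \<times> nat) syllable list"
  where "act w \<equiv> foldr gen_act w"

lemma normal_gen_act: "normal \<omega> \<Longrightarrow> normal (gen_act x \<omega>)"
  by (induction x \<omega> rule: gen_act.induct)
    (simp add: normal_free_act normal_foldr_free_act normal_sub_act in_Qtilde_A_fword)

lemma normal_act: "normal \<omega> \<Longrightarrow> normal (act w \<omega>)"
  by (induction w) (simp_all add: normal_gen_act)

lemma gen_act_inverse:
  assumes "normal \<omega>"
  shows "gen_act (x, \<not> b) (gen_act (x, b) \<omega>) = \<omega>"
proof -
  obtain j i where x: "x = (j, i)"
    by fastforce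
  consider "\<not> (j < C \<and> i < m)" | "j < C" "i < m" "Suc j < C" | "i < m" "\<not> Suc j < C"
    by linarith
  then show ?thesis
  proof cases
    case 3
    then show ?thesis
      using assms
      by (cases b) (simp_all add: x sub_act_sub_act sub_act_trivial normal_foldr_free_act
          normal_sub_act in_Qtilde_A_fword foldr_free_act_inverse normal_reduced)
  qed (simp_all add: x free_act_inverse normal_reduced assms)
qed

lemma act_A_prefix:
  "i < m \<Longrightarrow> act (A_prefix i) \<omega> = foldr free_act (A_prefix i) \<omega>"
  "i < m \<Longrightarrow> act (inv_word (A_prefix i)) \<omega> = foldr free_act (inv_word (A_prefix i)) \<omega>"
proof -
  have free: "act w \<omega> = foldr free_act w \<omega>" if "\<forall>((j, i), b) \<in> set w. Suc j < C \<and> i < m" for w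
    using that by (induction w) auto
  show "i < m \<Longrightarrow> act (A_prefix i) \<omega> = foldr free_act (A_prefix i) \<omega>"
    "i < m \<Longrightarrow> act (inv_word (A_prefix i)) \<omega> = foldr free_act (inv_word (A_prefix i)) \<omega>"
    by (auto intro!: free simp: A_prefix_def pos_word_def inv_word_def)
qed

lemma act_A_fword:
  assumes "i < m" and "normal \<omega>"
  shows "act (A_fword i) \<omega> = sub_act (A_fword i) \<omega>"
    and "act (inv_word (A_fword i)) \<omega> = sub_act (inv_word (A_fword i)) \<omega>"
proof -
  have last: "C - 1 < C" "\<not> Suc (C - 1) < C"
    using C_pos by simp_all
  have "act (A_fword i) \<omega> = foldr free_act (A_prefix i) (gen_act ((C - 1, i), False) \<omega>)"
    using assms(1) by (simp add: A_fword_split act_A_prefix del: gen_act.simps)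
  also have "\<dots> = sub_act (A_fword i) \<omega>"
    using assms last
    by (simp add: foldr_free_act_inverse normal_reduced normal_sub_act in_Qtilde_A_fword)
  finally show "act (A_fword i) \<omega> = sub_act (A_fword i) \<omega>" .
  have "inv_word (A_fword i) = ((C - 1, i), True) # inv_word (A_prefix i)"
    by (simp add: A_fword_split inv_word_append inv_word_def)
  then have "act (inv_word (A_fword i)) \<omega>
      = gen_act ((C - 1, i), True) (foldr free_act (inv_word (A_prefix i)) \<omega>)"
    using assms(1) by (simp add: act_A_prefix del: gen_act.simps)
  also have "\<dots> = sub_act (inv_word (A_fword i)) \<omega>"
    using assms last by (simp add: foldr_free_act_inverse normal_reduced)
  finally show "act (inv_word (A_fword i)) \<omega> = sub_act (inv_word (A_fword i)) \<omega>" .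
qed

lemma act_A_product:
  "\<forall>(i, e) \<in> set xs. i < m \<Longrightarrow> normal \<omega> \<Longrightarrow> act (A_product C xs) \<omega> = sub_act (A_product C xs) \<omega>"
proof (induction xs)
  case (Cons x xs)
  obtain i e where x: "x = (i, e)"
    by fastforce
  have "i < m" and "\<forall>(i, e) \<in> set xs. i < m"
    using Cons.prems(1) x by auto
  then show ?case
    using Cons.IH Cons.prems(2) x
    by (cases e) (simp_all add: A_product_Cons act_A_fword normal_sub_act in_Qtilde_A_product
        sub_act_sub_act)
qed (simp add: A_product_def sub_act_trivial)

lemma act_relator:
  assumes "r \<in> relators_C C S" and "normal \<omega>"
  shows "act r \<omega> = \<omega>"
proof -
  obtain r0 where "r0 \<in> S" and r: "r = A_product C (map (\<lambda>i. (i, False)) r0)"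
    using assms(1) by (auto simp: relators_C_def pos_word_rel_C)
  then have "act r \<omega> = sub_act r \<omega>"
    using relators_in_range assms(2) by (force intro!: act_A_product)
  moreover have "elem r = elem []"
    using pres_eq.rel[OF assms(1), of "[]" "[]"] by (simp add: elem_eq_iff)
  ultimately show ?thesis
    using assms(2) by (simp add: sub_act_trivial)
qed

lemma act_pres_eq: "pres_eq (relators_C C S) u v \<Longrightarrow> normal \<omega> \<Longrightarrow> act u \<omega> = act v \<omega>"
proof (induction arbitrary: \<omega> rule: pres_eq.induct)
  case (cancel u x b v)
  then show ?case
    using gen_act_inverse[of "act v \<omega>" x "\<not> b"] by (simp add: normal_act)
next
  case (rel r u v)
  then show ?case
    by (simp add: act_relator normal_act)
qed simp_all

lemma act_in_Qtilde:
  assumes "in_Qtilde C m S u" and "normal \<omega>"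
  shows "act u \<omega> = sub_act u \<omega>"
proof -
  obtain xs where xs: "\<forall>(i, e) \<in> set xs. i < m" and u: "pres_eq (relators_C C S) u (A_product C xs)"
    using assms(1) unfolding in_Qtilde_def by blast
  have "act u \<omega> = act (A_product C xs) \<omega>"
    using u assms(2) by (rule act_pres_eq)
  also have "\<dots> = sub_act (A_product C xs) \<omega>"
    using xs assms(2) by (rule act_A_product)
  also have "\<dots> = sub_act u \<omega>"
    using u by (simp add: sub_act_cong elem_eq_iff pres_eq.sym)
  finally show ?thesis .
qed

lemma elem_nf_word_gen_act:
  assumes "j < C" and "i < m" and "normal \<omega>"
  shows "elem (nf_word (gen_act ((j, i), b) \<omega>)) = elem (((j, i), b) # nf_word \<omega>)"
proof (cases "Suc j < C")
  case True
  then show ?thesis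
    using assms by (simp add: elem_nf_word_free_act)
next
  case False
  then have j: "j = C - 1"
    using assms(1) by simp
  show ?thesis
  proof (cases b)
    case True
    have "elem (nf_word (gen_act ((j, i), b) \<omega>))
        = elem (inv_word (A_fword i) @ nf_word (foldr free_act (A_prefix i) \<omega>))"
      using assms False True by (simp add: elem_nf_word_sub_act normal_foldr_free_act)
    also have "\<dots> = elem (inv_word (A_fword i) @ A_prefix i @ nf_word \<omega>)"
      by (rule elem_append_cong[OF HOL.refl elem_nf_word_foldr_free_act])
    also have "\<dots> = elem (((j, i), b) # nf_word \<omega>)"
      using elem_cancel_inverse[of "[((j, i), True)]"] j True
      by (simp add: A_fword_split inv_word_append inv_word_Cons)
    finally show ?thesis .
  next
    case False
    have "elem (nf_word (gen_act ((j, i), b) \<omega>))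
        = elem (inv_word (A_prefix i) @ nf_word (sub_act (A_fword i) \<omega>))"
      using assms \<open>\<not> Suc j < C\<close> False by (simp add: elem_nf_word_foldr_free_act)
    also have "\<dots> = elem (inv_word (A_prefix i) @ A_fword i @ nf_word \<omega>)"
      by (rule elem_append_cong[OF HOL.refl elem_nf_word_sub_act[OF assms(3)]])
    also have "\<dots> = elem (((j, i), b) # nf_word \<omega>)"
      using elem_cancel_inverse[of "[]"] j False by (simp add: A_fword_split)
    finally show ?thesis .
  qed
qed

lemma elem_nf_word_act:
  "is_word_YC C m w \<Longrightarrow> normal \<omega> \<Longrightarrow> elem (nf_word (act w \<omega>)) = elem (w @ nf_word \<omega>)"
proof (induction w)
  case (Cons x w)
  obtain j i b where x: "x = ((j, i), b)"
    by (metis prod.collapse)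
  have "j < C" "i < m" and w: "is_word_YC C m w"
    using Cons.prems(1) x by (auto simp: is_word_YC_def)
  then have "elem (nf_word (act (x # w) \<omega>)) = elem ([x] @ nf_word (act w \<omega>))"
    using x Cons.prems(2) by (simp add: elem_nf_word_gen_act normal_act del: gen_act.simps)
  also have "\<dots> = elem ([x] @ w @ nf_word \<omega>)"
    using Cons.IH[OF w Cons.prems(2)] by (rule elem_append_cong[OF HOL.refl])
  finally show ?case
    by simp
qed simp

lemma in_Qtilde_if_act_without_free:
  assumes "is_word_YC C m g" and "\<not> has_free (act g [])"
  shows "in_Qtilde C m S g"
proof -
  obtain w where w: "act g [] = sub_block w" and "in_Qtilde C m S w"
    using normal_act[OF normal_Nil] assms(2) by (rule normal_without_free)
  have "elem g = elem (nf_word (act g []))"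
    using elem_nf_word_act[OF assms(1) normal_Nil] by simp
  also have "\<dots> = elem w"
    by (simp add: w elem_nf_word_sub_block)
  finally show ?thesis
    using \<open>in_Qtilde C m S w\<close> by (simp add: elem_eq_iff in_Qtilde_pres_eq)
qed

lemma gen_act_right_mult: "normal \<omega> \<Longrightarrow> gen_act x (right_mult \<omega> d) = right_mult (gen_act x \<omega>) d"
  by (induction x \<omega> rule: gen_act.induct)
    (simp add: free_act_right_mult foldr_free_act_right_mult sub_act_right_mult
      normal_foldr_free_act normal_sub_act in_Qtilde_A_fword del: right_mult.simps)

lemma act_right_mult: "normal \<omega> \<Longrightarrow> act w (right_mult \<omega> d) = right_mult (act w \<omega>) d"
  by (induction w) (simp_all add: gen_act_right_mult normal_act del: gen_act.simps right_mult.simps)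

lemma sub_act_eq_right_mult_conjugate:
  assumes "in_Qtilde C m S x" and "in_Qtilde C m S (inv_word g @ x @ g)"
  shows "sub_act x (act g []) = right_mult (act g []) (inv_word g @ x @ g)"
proof -
  have "pres_eq (relators_C C S) (x @ g) (g @ inv_word g @ x @ g)"
    using pres_eq_append[OF pres_eq_inv_right pres_eq.refl, of _ g "x @ g"]
    by (simp add: pres_eq.sym)
  then have "act x (act g []) = act g (act (inv_word g @ x @ g) [])"
    unfolding foldr_append[symmetric] by (rule act_pres_eq) simp
  also have "act (inv_word g @ x @ g) [] = right_mult [] (inv_word g @ x @ g)"
    using assms(2) by (simp add: act_in_Qtilde del: foldr_append)
  also have "act g (right_mult [] (inv_word g @ x @ g))
      = right_mult (act g []) (inv_word g @ x @ g)"
    by (simp add: act_right_mult del: right_mult.simps)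
  finally show ?thesis
    using assms(1) by (simp add: act_in_Qtilde normal_act)
qed

end

theorem lemma3p5:
  fixes C m :: nat and S :: "nat list set"
    and g x :: "(nat \<times> nat) fword"
  assumes "C \<ge> 1"
    and "\<forall>r \<in> S. r \<noteq> [] \<and> set r \<subseteq> {..<m}"
    and "is_word_YC C m g" and "\<not> in_Qtilde C m S g"
    and "is_word_YC C m x" and "in_Qtilde C m S x"
    and "in_Qtilde C m S (inv_word g @ x @ g)"
  shows "pres_eq (relators_C C S) x []"
proof -
  interpret QC C m S
    using assms(1,2) by unfold_locales blast+
  have "normal (act g [])"
    by (rule normal_act[OF normal_Nil])
  moreover have "has_free (act g [])"
    using assms(3,4) in_Qtilde_if_act_without_free by blast
  moreover have "sub_act x (act g []) = right_mult (act g []) (inv_word g @ x @ g)"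
    using assms(6,7) by (rule sub_act_eq_right_mult_conjugate)
  ultimately have "elem x = elem []"
    by (rule trivial_if_sub_act_eq_right_mult)
  then show ?thesis
    by (simp add: elem_eq_iff)
qed

end
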